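(* Let $p\ge1$, $q\ge0$, and for $i=1,\dots,r$ let $f_i:\mathbb{R}^p\times\mathbb{R}^q\to\mathbb{R}$ be permutation-invariant with respect to its first argument. Let $\bar S=\{(M,z)\in\mathcal{S}^p\times\mathbb{R}^q\mid f_i(\lambda(M),z)\le1,\ i=1,\dots,r\}$ and $S=\{(x,z)\in\mathbb{R}^p\times\mathbb{R}^q\mid f_i(x,z)\le1,\ i=1,\dots,r\}$. Then $$\mathrm{conv}(\bar S)=\{(M,z)\in\mathcal{S}^p\times\mathbb{R}^q\mid(\lambda(M),z)\in\mathrm{conv}(S)\}.$$
   Context: $\mathcal{S}^p$ is the space of real symmetric $p\times p$ matrices and $\lambda(M)\in\mathbb{R}^p$ is the vector of eigenvalues of $M$ in nonincreasing order. $f(x,z)$ is permutation-invariant with respect to $x$ if $f(Px,z)=f(x,z)$ for every permutation matrix $P$. *)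

theory Defs
  imports "HOL-Analysis.Analysis" "HOL-Computational_Algebra.Polynomial"
begin

definition symmetric_matrix :: "real^'p^'p \<Rightarrow> bool" where
  "symmetric_matrix M \<longleftrightarrow> transpose M = M"

definition char_poly :: "real^'p^'p \<Rightarrow> real poly" where
  "char_poly M = det (\<chi> i j. (if i = j then [:0, 1:] else 0) - [:M $ i $ j:])"

text \<open>Vector of eigenvalues (with multiplicity) in nonincreasing order; the
  index type is linearly ordered, its k-th smallest index carries the k-th
  largest eigenvalue.\<close>
definition eigvals :: "real^('p::{finite,linorder})^('p::{finite,linorder}) \<Rightarrow> real^('p::{finite,linorder})" where
  "eigvals M = (\<chi> i. rev (sorted_list_of_multiset (proots (char_poly M))) ! card {j. j < i})"

definition perm_matrix :: "('p \<Rightarrow> 'p) \<Rightarrow> real^'p^'p" where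
  "perm_matrix \<sigma> = (\<chi> i j. if \<sigma> i = j then 1 else 0)"

definition is_perm_matrix :: "real^'p^'p \<Rightarrow> bool" where
  "is_perm_matrix P \<longleftrightarrow> (\<exists>\<sigma>. \<sigma> permutes UNIV \<and> P = perm_matrix \<sigma>)"

definition perm_invariant :: "(real^'p \<Rightarrow> 'z \<Rightarrow> real) \<Rightarrow> bool" where
  "perm_invariant f \<longleftrightarrow> (\<forall>P x z. is_perm_matrix P \<longrightarrow> f (P *v x) z = f x z)"

end

theory Submission
  imports Defs "HOL-Combinatorics.List_Permutation"
begin

text \<open>Every symmetric \<open>M\<close> is \<open>Q diag(\<lambda>(M)) Q\<^sup>T\<close> with \<open>Q\<close> orthogonal, and the
  eigenvalue vector of \<open>Q diag(x) Q\<^sup>T\<close> is a permutation of \<open>x\<close>. Hence the linear map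
  \<open>(x, z) \<mapsto> (Q diag(x) Q\<^sup>T, z)\<close> sends \<open>S\<close> into the set of pairs \<open>(M, z)\<close> with
  \<open>(\<lambda>(M), z) \<in> S\<close>, and \<open>(\<lambda>(M), z)\<close> to \<open>(M, z)\<close>, which gives one inclusion.
  For the other it suffices that the right-hand side is convex. If \<open>Q\<close> diagonalises
  \<open>N = u A + v B\<close>, then \<open>\<lambda>(N)\<close> is \<open>u\<close> times the diagonal of \<open>Q\<^sup>T A Q\<close> plus \<open>v\<close> times
  that of \<open>Q\<^sup>T B Q\<close>. By Schur, the diagonal of \<open>Q\<^sup>T A Q\<close> is the image of \<open>\<lambda>(A)\<close>
  under a doubly stochastic matrix, so by a rearrangement argument it lies in the convex
  hull of the permutations of \<open>\<lambda>(A)\<close>, which permutation invariance keeps inside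
  \<open>conv S\<close>.\<close>

section \<open>Doubly stochastic matrices\<close>

definition doubly_stochastic :: "real^'n^'n \<Rightarrow> bool" where
  "doubly_stochastic S \<longleftrightarrow> (\<forall>i j. 0 \<le> S$i$j) \<and>
     (\<forall>i. (\<Sum>j\<in>UNIV. S$i$j) = 1) \<and> (\<forall>j. (\<Sum>i\<in>UNIV. S$i$j) = 1)"

lemma doubly_stochastic_permute_columns:
  assumes "doubly_stochastic S" and "\<sigma> permutes UNIV"
  shows "doubly_stochastic (\<chi> i j. S$i$\<sigma> j)"
  using assms sum.permute[OF assms(2), of "\<lambda>j. S$_$j"]
  by (simp add: doubly_stochastic_def o_def)

text \<open>Column \<open>m\<close> puts mass \<open>c m \<in> [0, 1]\<close> on the rows in \<open>U\<close>, and these masses add up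
  to \<open>card U\<close>: what \<open>U\<close> receives from outside, where \<open>e \<le> t\<close>, is exactly what it misses
  inside, where \<open>e \<ge> t\<close>.\<close>
lemma doubly_stochastic_sum_le_upper_set:
  fixes T :: "real^'n::finite^'n" and e :: "real^'n"
  assumes T: "doubly_stochastic T"
    and up: "\<And>m. m \<in> U \<Longrightarrow> t \<le> e$m" and lo: "\<And>m. m \<notin> U \<Longrightarrow> e$m \<le> t"
  shows "(\<Sum>j\<in>U. (T *v e)$j) \<le> (\<Sum>j\<in>U. e$j)"
proof -
  define c where "c m = (\<Sum>j\<in>U. T$j$m)" for m
  have c0: "0 \<le> c m" and c1: "c m \<le> 1" for m
  proof -
    show "0 \<le> c m" using T unfolding c_def doubly_stochastic_def by (simp add: sum_nonneg)
    have "c m \<le> (\<Sum>j\<in>UNIV. T$j$m)"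
      using T unfolding c_def doubly_stochastic_def by (intro sum_mono2) auto
    then show "c m \<le> 1" using T by (simp add: doubly_stochastic_def)
  qed
  have split: "(\<Sum>m\<in>UNIV. g m) = (\<Sum>m\<in>U. g m) + (\<Sum>m\<in>-U. g m)" for g :: "'n \<Rightarrow> real"
    by (metis Compl_eq_Diff_UNIV finite sum.subset_diff top_greatest add.commute)
  have "(\<Sum>m\<in>UNIV. c m) = real (card U)"
    using T unfolding c_def by (subst sum.swap) (simp add: doubly_stochastic_def)
  then have mass: "(\<Sum>m\<in>-U. c m) = (\<Sum>m\<in>U. 1 - c m)"
    using split[of c] by (simp add: sum_subtractf)
  have "(\<Sum>j\<in>U. (T *v e)$j) = (\<Sum>m\<in>UNIV. c m * e$m)"
    unfolding c_def by (simp add: matrix_vector_mult_def sum_distrib_right) (rule sum.swap)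
  also have "\<dots> = (\<Sum>m\<in>U. c m * e$m) + (\<Sum>m\<in>-U. c m * e$m)" by (rule split)
  also have "(\<Sum>m\<in>-U. c m * e$m) \<le> (\<Sum>m\<in>-U. c m * t)"
    by (intro sum_mono) (simp add: c0 lo mult_left_mono)
  also have "\<dots> = (\<Sum>m\<in>U. (1 - c m) * t)" by (simp add: mass sum_distrib_right[symmetric])
  also have "\<dots> \<le> (\<Sum>m\<in>U. (1 - c m) * e$m)"
    by (intro sum_mono) (simp add: c1 up mult_left_mono)
  finally show ?thesis by (simp add: sum.distrib[symmetric] algebra_simps)
qed

lemma inner_indicator_vec: "(\<chi> j. if j \<in> U then 1 else 0) \<bullet> x = (\<Sum>j\<in>U. x$j :: real)"
proof -
  have "(\<chi> j. if j \<in> U then 1 else 0) \<bullet> x = (\<Sum>j\<in>UNIV. if j \<in> U then x$j else 0)"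
    unfolding inner_vec_def by (intro sum.cong) auto
  then show ?thesis by (simp add: sum.If_cases)
qed

lemma lower_values_above_min:
  fixes a :: "real^'n::finite"
  assumes U: "U = {j. Min (range (($) a)) < a$j}" and "U \<noteq> {}"
  obtains \<delta> a' where "\<delta> > 0" "a = a' + \<delta> *\<^sub>R (\<chi> j. if j \<in> U then 1 else 0)"
    "card {j. Min (range (($) a')) < a'$j} < card U" "\<And>j l. a'$j < a'$l \<Longrightarrow> a$j < a$l"
proof -
  define m0 where "m0 = Min (range (($) a))"
  have U: "U = {j. m0 < a$j}" and am0: "m0 \<le> a$j" for j using U by (simp_all add: m0_def)
  define \<delta> where "\<delta> = Min ((($) a) ` U) - m0"
  define a' where "a' = a - \<delta> *\<^sub>R (\<chi> j. if j \<in> U then 1 else 0)"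
  have "Min ((($) a) ` U) \<in> ($) a ` U" using assms(2) by (intro Min_in) auto
  then obtain j1 where j1: "j1 \<in> U" "a$j1 = m0 + \<delta>" unfolding \<delta>_def by auto
  have \<delta>: "\<delta> > 0" using j1 by (simp add: U)
  have \<delta>_le: "m0 + \<delta> \<le> a$j" if "j \<in> U" for j
    using that unfolding \<delta>_def by simp
  have a'ge: "m0 \<le> a'$j" for j using \<delta>_le[of j] am0[of j] by (auto simp: a'_def)
  obtain j0 where "a$j0 = m0" unfolding m0_def
    by (metis Min_in UNIV_not_empty finite finite_imageI image_iff image_is_empty)
  then have "a'$j0 = m0" by (simp add: a'_def U)
  then have min': "Min (range (($) a')) = m0"
    by (intro antisym) (metis Min_le finite finite_imageI rangeI, simp add: Min_ge_iff a'ge)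
  have "{j. m0 < a'$j} \<subset> U"
  proof
    show "{j. m0 < a'$j} \<subseteq> U" using am0 by (auto simp: a'_def U)
    have "a'$j1 = m0" using j1 by (simp add: a'_def)
    then show "{j. m0 < a'$j} \<noteq> U" using j1(1) by auto
  qed
  then have fewer: "card {j. Min (range (($) a')) < a'$j} < card U"
    by (simp add: min' psubset_card_mono)
  have ord: "a$j < a$l" if "a'$j < a'$l" for j l
    using that a'ge[of j] am0[of l] by (auto simp: a'_def U split: if_splits)
  have "a = a' + \<delta> *\<^sub>R (\<chi> j. if j \<in> U then 1 else 0)" by (simp add: a'_def)
  then show ?thesis using \<delta> fewer ord by (intro that)
qed

text \<open>Induction on the number of values of \<open>a\<close> above its minimum: lowering them
  decomposes \<open>a\<close> into a vector with fewer such values plus a positive multiple of the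
  indicator of an upper level set of \<open>e\<close>.\<close>
lemma doubly_stochastic_inner_le:
  fixes T :: "real^'n::finite^'n" and a e :: "real^'n"
  assumes T: "doubly_stochastic T" and ord: "\<And>j l. a$j < a$l \<Longrightarrow> e$j \<le> e$l"
  shows "a \<bullet> (T *v e) \<le> a \<bullet> e"
  using ord
proof (induction "card {j. Min (range (($) a)) < a$j}" arbitrary: a rule: less_induct)
  case less
  define U where "U = {j. Min (range (($) a)) < a$j}"
  show ?case
  proof (cases "U = {}")
    case True
    define m where "m = Min (range (($) a))"
    have "a$j = m" for j
    proof -
      have "\<not> m < a$j" using True by (auto simp: U_def m_def)
      moreover have "m \<le> a$j" by (simp add: m_def)
      ultimately show ?thesis by linarith
    qed
    then have "a = m *\<^sub>R 1" by (simp add: vec_eq_iff)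
    moreover have "1 \<bullet> (T *v e) = 1 \<bullet> e"
      using T by (simp add: inner_vec_def matrix_vector_mult_def doubly_stochastic_def
          sum.swap[of _ UNIV] sum_distrib_right[symmetric])
    ultimately show ?thesis by simp
  next
    case False
    obtain \<delta> a' where \<delta>: "\<delta> > 0" and a: "a = a' + \<delta> *\<^sub>R (\<chi> j. if j \<in> U then 1 else 0)"
      and fewer: "card {j. Min (range (($) a')) < a'$j} < card U"
      and ord': "\<And>j l. a'$j < a'$l \<Longrightarrow> a$j < a$l"
      using lower_values_above_min[OF U_def False] by blast
    have IH: "a' \<bullet> (T *v e) \<le> a' \<bullet> e"
      using fewer ord' less.prems by (intro less.hyps) (auto simp: U_def)
    have "e$m \<le> Min ((($) e) ` U)" if "m \<notin> U" for m
      using that False by (auto simp: Min_ge_iff U_def intro: less.prems)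
    then have "(\<Sum>j\<in>U. (T *v e)$j) \<le> (\<Sum>j\<in>U. e$j)"
      by (intro doubly_stochastic_sum_le_upper_set[OF T]) (auto intro: Min_le)
    then have "\<delta> * (\<Sum>j\<in>U. (T *v e)$j) \<le> \<delta> * (\<Sum>j\<in>U. e$j)" using \<delta> by simp
    then show ?thesis
      using IH unfolding a by (simp add: inner_add_left inner_indicator_vec)
  qed
qed

lemma maximal_permutation_similarly_ordered:
  fixes a d :: "real^'n::finite"
  assumes \<sigma>: "\<sigma> permutes UNIV"
    and max: "\<And>\<tau>. \<tau> permutes UNIV \<Longrightarrow> a \<bullet> (\<chi> i. d$\<tau> i) \<le> a \<bullet> (\<chi> i. d$\<sigma> i)"
    and lt: "a$j < a$l"
  shows "d$\<sigma> j \<le> d$\<sigma> l"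
proof -
  define \<tau> where "\<tau> = \<sigma> \<circ> Transposition.transpose j l"
  have jl: "j \<noteq> l" using lt by auto
  have "a \<bullet> (\<chi> i. d$\<tau> i) - a \<bullet> (\<chi> i. d$\<sigma> i) = (\<Sum>i\<in>UNIV. a$i * (d$\<tau> i - d$\<sigma> i))"
    by (simp add: inner_vec_def sum_subtractf algebra_simps)
  also have "\<dots> = (\<Sum>i\<in>{j, l}. a$i * (d$\<tau> i - d$\<sigma> i))"
    by (intro sum.mono_neutral_right) (auto simp: \<tau>_def transpose_apply_other)
  also have "\<dots> = (a$l - a$j) * (d$\<sigma> j - d$\<sigma> l)"
    using jl by (simp add: \<tau>_def algebra_simps)
  finally have "(a$l - a$j) * (d$\<sigma> j - d$\<sigma> l) \<le> 0"
    using max[of \<tau>] \<sigma> by (simp add: \<tau>_def permutes_compose permutes_swap_id)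
  then show ?thesis using lt by (simp add: mult_le_0_iff)
qed

lemma doubly_stochastic_inner_le_permutation:
  fixes S :: "real^'n::finite^'n" and a d :: "real^'n"
  assumes S: "doubly_stochastic S"
  obtains \<sigma> where "\<sigma> permutes UNIV" "a \<bullet> (S *v d) \<le> a \<bullet> (\<chi> i. d$\<sigma> i)"
proof -
  define P where "P = {\<sigma>::'n \<Rightarrow> 'n. \<sigma> permutes UNIV}"
  define F where "F \<sigma> = a \<bullet> (\<chi> i. d$\<sigma> i)" for \<sigma> :: "'n \<Rightarrow> 'n"
  have "finite P" "id \<in> P" by (simp_all add: P_def finite_permutations permutes_id)
  then have "Max (F ` P) \<in> F ` P" by (intro Max_in) auto
  then obtain \<sigma> where \<sigma>: "\<sigma> \<in> P" and "F \<sigma> = Max (F ` P)" by auto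
  then have max: "\<And>\<tau>. \<tau> \<in> P \<Longrightarrow> F \<tau> \<le> F \<sigma>" using \<open>finite P\<close> by simp
  define T where "T = (\<chi> i j. S$i$\<sigma> j)"
  have "a \<bullet> (S *v d) = a \<bullet> (T *v (\<chi> i. d$\<sigma> i))"
    using sum.permute[of \<sigma> UNIV "\<lambda>j. S$_$j * d$j"] \<sigma>
    by (simp add: T_def P_def matrix_vector_mult_def o_def)
  also have "\<dots> \<le> F \<sigma>" unfolding F_def
  proof (rule doubly_stochastic_inner_le)
    show "doubly_stochastic T"
      unfolding T_def using S \<sigma> by (simp add: P_def doubly_stochastic_permute_columns)
    show "(\<chi> i. d$\<sigma> i)$j \<le> (\<chi> i. d$\<sigma> i)$l" if "a$j < a$l" for j l
      using maximal_permutation_similarly_ordered[of \<sigma> a d, OF _ _ that] \<sigma> max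
      unfolding P_def F_def by simp
  qed
  finally show ?thesis using that \<sigma> by (simp add: P_def F_def)
qed

text \<open>Hardy--Littlewood--P\'olya: by separation it suffices to dominate every linear
  functional on \<open>S *v d\<close> by its value at some permutation of \<open>d\<close>.\<close>
lemma doubly_stochastic_mult_in_convex_hull_permutations:
  fixes S :: "real^'n::finite^'n" and d :: "real^'n"
  assumes S: "doubly_stochastic S"
  shows "S *v d \<in> convex hull ((\<lambda>\<sigma>. \<chi> i. d$\<sigma> i) ` {\<sigma>. \<sigma> permutes UNIV})"
proof (rule ccontr)
  let ?K = "convex hull ((\<lambda>\<sigma>. \<chi> i. d$\<sigma> i) ` {\<sigma>::'n \<Rightarrow> 'n. \<sigma> permutes UNIV})"
  assume "S *v d \<notin> ?K"
  moreover have "closed ?K"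
    by (intro compact_imp_closed compact_convex_hull finite_imp_compact finite_imageI)
      (simp add: finite_permutations)
  ultimately obtain a b where "a \<bullet> (S *v d) < b" "\<forall>x\<in>?K. b < a \<bullet> x"
    using separating_hyperplane_closed_point[OF convex_convex_hull] by blast
  moreover obtain \<sigma> where "\<sigma> permutes UNIV" "-a \<bullet> (S *v d) \<le> -a \<bullet> (\<chi> i. d$\<sigma> i)"
    using doubly_stochastic_inner_le_permutation[OF S] .
  moreover have "(\<chi> i. d$\<sigma> i) \<in> ?K" using \<open>\<sigma> permutes UNIV\<close> by (intro hull_inc) auto
  ultimately show False by force
qed

section \<open>Spectral theorem for real symmetric matrices\<close>

lemma symmetric_matrix_inner:
  assumes "symmetric_matrix M"
  shows "(M *v x) \<bullet> y = x \<bullet> (M *v y)"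
  using assms vector_transpose_matrix[of x M]
  by (simp add: symmetric_matrix_def dot_lmul_matrix[symmetric])

text \<open>First-order condition for a maximiser \<open>v\<close> of the Rayleigh quotient: the residual
  \<open>w = M v - c v\<close> is orthogonal to \<open>v\<close>, and moving from \<open>v\<close> towards \<open>w\<close> by a
  small step \<open>t\<close> raises the quotient by \<open>2 t |w|\<^sup>2 + O(t\<^sup>2)\<close>.\<close>
lemma rayleigh_maximizer_eigenvector:
  fixes M :: "real^'n^'n"
  assumes sym: "symmetric_matrix M" and V: "subspace V" and inv: "\<And>x. x \<in> V \<Longrightarrow> M *v x \<in> V"
    and v: "v \<in> V" "v \<bullet> v = 1"
    and max: "\<And>y. y \<in> V \<Longrightarrow> y \<bullet> (M *v y) \<le> (v \<bullet> (M *v v)) * (y \<bullet> y)"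
  shows "M *v v = (v \<bullet> (M *v v)) *\<^sub>R v"
proof (rule ccontr)
  define c where "c = v \<bullet> (M *v v)"
  define w where "w = M *v v - c *\<^sub>R v"
  assume "M *v v \<noteq> (v \<bullet> (M *v v)) *\<^sub>R v"
  then have W: "w \<bullet> w > 0" by (simp add: w_def c_def)
  define K where "K = c * (w \<bullet> w) - w \<bullet> (M *v w)"
  define t where "t = (w \<bullet> w) / (\<bar>K\<bar> + 1)"
  have t: "t > 0" using W by (simp add: t_def)
  have wv: "w \<bullet> v = 0"
    using v(2) by (simp add: w_def c_def inner_diff_left inner_diff_right inner_commute)
  have wMv: "w \<bullet> (M *v v) = w \<bullet> w"
    using wv by (simp add: w_def inner_diff_right inner_diff_left)
  have vMw: "v \<bullet> (M *v w) = w \<bullet> w"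
    using symmetric_matrix_inner[OF sym, of v w] wMv by (simp add: inner_commute)
  define y where "y = v + t *\<^sub>R w"
  have "y \<in> V" using v inv V by (simp add: y_def w_def subspace_add subspace_mul subspace_diff)
  then have "y \<bullet> (M *v y) \<le> c * (y \<bullet> y)" using max by (simp add: c_def)
  moreover have "y \<bullet> (M *v y) = c + 2 * t * (w \<bullet> w) + t\<^sup>2 * (w \<bullet> (M *v w))"
    using wMv vMw by (simp add: y_def c_def matrix_vector_right_distrib matrix_vector_mult_scaleR
        inner_add_left inner_add_right power2_eq_square algebra_simps)
  moreover have "y \<bullet> y = 1 + t\<^sup>2 * (w \<bullet> w)"
    using v(2) wv by (simp add: y_def inner_add_left inner_add_right inner_commute power2_eq_square)
  ultimately have "t * (2 * (w \<bullet> w)) \<le> t * (t * K)"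
    by (simp add: K_def power2_eq_square algebra_simps)
  then have "2 * (w \<bullet> w) \<le> t * K" using t by simp
  also have "t * K < w \<bullet> w"
  proof -
    have "t * K \<le> t * \<bar>K\<bar>" using t by (intro mult_left_mono) auto
    also have "\<dots> = (w \<bullet> w) * (\<bar>K\<bar> / (\<bar>K\<bar> + 1))" by (simp add: t_def)
    also have "\<dots> < (w \<bullet> w) * 1" using W by (intro mult_strict_left_mono) auto
    finally show ?thesis by simp
  qed
  finally show False using W by simp
qed

lemma invariant_subspace_has_eigenvector:
  fixes M :: "real^'n^'n"
  assumes sym: "symmetric_matrix M" and V: "subspace V" and inv: "\<And>x. x \<in> V \<Longrightarrow> M *v x \<in> V"
    and x0: "x0 \<in> V" "x0 \<noteq> 0"
  obtains v c where "v \<in> V" "norm v = 1" "M *v v = c *\<^sub>R v"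
proof -
  define q where "q x = x \<bullet> (M *v x)" for x
  define K where "K = V \<inter> sphere 0 1"
  have "compact K" unfolding K_def by (rule closed_Int_compact[OF closed_subspace[OF V]]) simp
  moreover have "x0 /\<^sub>R norm x0 \<in> K" using x0 V by (simp add: K_def subspace_mul)
  moreover have "continuous_on K q" unfolding q_def
    by (intro continuous_intros linear_continuous_on matrix_vector_mul_bounded_linear)
  ultimately obtain v where vK: "v \<in> K" and vmax: "\<And>y. y \<in> K \<Longrightarrow> q y \<le> q v"
    using continuous_attains_sup[of K q] by blast
  have "v \<in> V" "norm v = 1" using vK by (auto simp: K_def)
  have "q y \<le> q v * (y \<bullet> y)" if "y \<in> V" for y
  proof (cases "y = 0")
    case False
    then have "y /\<^sub>R norm y \<in> K" using that V by (simp add: K_def subspace_mul)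
    moreover have "q (y /\<^sub>R norm y) = q y / (norm y)\<^sup>2"
      by (simp add: q_def matrix_vector_mult_scaleR power2_eq_square divide_inverse)
    ultimately have "q y / (norm y)\<^sup>2 \<le> q v" using vmax by fastforce
    then show ?thesis using False by (simp add: power2_norm_eq_inner field_simps)
  qed (simp add: q_def)
  then have "M *v v = q v *\<^sub>R v"
    using \<open>v \<in> V\<close> \<open>norm v = 1\<close> unfolding q_def
    by (intro rayleigh_maximizer_eigenvector[OF sym V inv]) (auto simp: norm_eq_1)
  then show ?thesis using that \<open>v \<in> V\<close> \<open>norm v = 1\<close> by blast
qed

lemma subspace_orthogonal_section:
  fixes v :: "'a::euclidean_space"
  assumes V: "subspace V" and v: "v \<in> V" "v \<bullet> v = 1"
  shows "subspace (V \<inter> {x. v \<bullet> x = 0})" and "dim (V \<inter> {x. v \<bullet> x = 0}) < dim V"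
    and "\<And>x. x \<in> V \<Longrightarrow> x - (v \<bullet> x) *\<^sub>R v \<in> V \<inter> {x. v \<bullet> x = 0}"
proof -
  show V': "subspace (V \<inter> {x. v \<bullet> x = 0})" by (rule subspace_inter[OF V subspace_hyperplane])
  have "v \<notin> V \<inter> {x. v \<bullet> x = 0}" using v by simp
  then have "V \<inter> {x. v \<bullet> x = 0} \<subset> V" using v by blast
  then show "dim (V \<inter> {x. v \<bullet> x = 0}) < dim V" using V V' by (metis dim_psubset span_eq_iff)
  show "x - (v \<bullet> x) *\<^sub>R v \<in> V \<inter> {x. v \<bullet> x = 0}" if "x \<in> V" for x
    using that V v by (simp add: subspace_diff subspace_mul inner_diff_right)
qed

lemma invariant_subspace_orthonormal_eigenbasis:
  fixes M :: "real^'n^'n"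
  assumes sym: "symmetric_matrix M" and "subspace V" and "\<And>x. x \<in> V \<Longrightarrow> M *v x \<in> V"
  obtains B where "B \<subseteq> V" "pairwise orthogonal B"
    "\<And>b. b \<in> B \<Longrightarrow> norm b = 1 \<and> (\<exists>c. M *v b = c *\<^sub>R b)" "V \<subseteq> span B"
  using assms(2,3)
proof (induction "dim V" arbitrary: V thesis rule: less_induct)
  case (less V)
  show ?case
  proof (cases "V \<subseteq> {0}")
    case True
    then show ?thesis by (intro less.prems(1)[of "{}"]) auto
  next
    case False
    then obtain x0 where "x0 \<in> V" "x0 \<noteq> 0" by blast
    then obtain v c where v: "v \<in> V" "norm v = 1" "M *v v = c *\<^sub>R v"
      using invariant_subspace_has_eigenvector[OF sym less.prems(2,3)] by blast
    have vv: "v \<bullet> v = 1" using v(2) by (simp add: norm_eq_1)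
    define V' where "V' = V \<inter> {x. v \<bullet> x = 0}"
    note V' = subspace_orthogonal_section[OF less.prems(2) v(1) vv, folded V'_def]
    have "M *v x \<in> V'" if "x \<in> V'" for x
      using that symmetric_matrix_inner[OF sym, of v x] less.prems(3) by (simp add: V'_def v(3))
    then obtain B' where B': "B' \<subseteq> V'" "pairwise orthogonal B'"
      "\<And>b. b \<in> B' \<Longrightarrow> norm b = 1 \<and> (\<exists>c. M *v b = c *\<^sub>R b)" "V' \<subseteq> span B'"
      using less.hyps[OF V'(2) _ V'(1)] by blast
    show ?thesis
    proof (rule less.prems(1)[of "insert v B'"])
      show "insert v B' \<subseteq> V" using B'(1) v(1) by (auto simp: V'_def)
      show "pairwise orthogonal (insert v B')"
        using B'(1,2) by (auto simp: pairwise_insert orthogonal_def inner_commute V'_def)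
      show "\<And>b. b \<in> insert v B' \<Longrightarrow> norm b = 1 \<and> (\<exists>c. M *v b = c *\<^sub>R b)"
        using B'(3) v by blast
      show "V \<subseteq> span (insert v B')"
      proof
        fix x assume "x \<in> V"
        then have "x - (v \<bullet> x) *\<^sub>R v \<in> span (insert v B')"
          using V'(3) B'(4) span_mono[of B' "insert v B'"] by blast
        then show "x \<in> span (insert v B')"
          by (metis span_add span_base span_mul insertI1 diff_add_cancel)
      qed
    qed
  qed
qed

lemma symmetric_matrix_orthonormal_eigenvectors:
  fixes M :: "real^'n^'n"
  assumes sym: "symmetric_matrix M"
  obtains g :: "'n \<Rightarrow> real^'n" and d where "\<And>j. norm (g j) = 1"
    "\<And>j k. j \<noteq> k \<Longrightarrow> orthogonal (g j) (g k)" "\<And>j. M *v g j = d$j *\<^sub>R g j"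
proof -
  obtain B where B: "pairwise orthogonal B" "\<And>b. b \<in> B \<Longrightarrow> norm b = 1 \<and> (\<exists>c. M *v b = c *\<^sub>R b)"
    "UNIV \<subseteq> span B"
    using invariant_subspace_orthonormal_eigenbasis[OF sym subspace_UNIV] by (metis UNIV_I)
  have "0 \<notin> B" using B(2) by force
  then have ind: "independent B" using B(1) by (intro pairwise_orthogonal_independent)
  have "span B = UNIV" using B(3) by auto
  then have "card B = CARD('n)" using dim_span_eq_card_independent[OF ind] by simp
  moreover have "finite B" using ind by (rule independent_imp_finite)
  ultimately obtain g where g: "bij_betw g (UNIV::'n set) B"
    using finite_same_card_bij[of "UNIV::'n set" B] by auto
  then have gB: "g j \<in> B" and ginj: "g j = g k \<longleftrightarrow> j = k" for j k
    by (auto simp: bij_betw_def inj_eq)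
  have "\<forall>j. \<exists>c. M *v g j = c *\<^sub>R g j" using B(2)[OF gB] by blast
  then obtain c where c: "\<And>j. M *v g j = c j *\<^sub>R g j" by (auto dest!: choice)
  show ?thesis
  proof (rule that)
    show "norm (g j) = 1" for j using B(2) gB by blast
    show "orthogonal (g j) (g k)" if "j \<noteq> k" for j k
      using B(1) gB ginj that by (auto simp: pairwise_def)
    show "M *v g j = (\<chi> j. c j)$j *\<^sub>R g j" for j by (simp add: c)
  qed
qed

definition diag_matrix :: "real^'n \<Rightarrow> real^'n^'n" where
  "diag_matrix d = (\<chi> i j. if i = j then d$i else 0)"

theorem symmetric_matrix_diagonalizable:
  fixes M :: "real^'n^'n"
  assumes "symmetric_matrix M"
  obtains Q d where "orthogonal_matrix Q" "M = Q ** diag_matrix d ** transpose Q"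
proof -
  obtain g :: "'n \<Rightarrow> real^'n" and d where g: "\<And>j. norm (g j) = 1"
    "\<And>j k. j \<noteq> k \<Longrightarrow> orthogonal (g j) (g k)" and eig: "\<And>j. M *v g j = d$j *\<^sub>R g j"
    using symmetric_matrix_orthonormal_eigenvectors[OF assms] by blast
  define Q where "Q = (\<chi> i j. g j $ i)"
  have col: "column j Q = g j" for j by (simp add: Q_def column_def)
  have "orthogonal_matrix Q"
    unfolding orthogonal_matrix_orthonormal_columns col using g by blast
  moreover have "M ** Q = Q ** diag_matrix d"
  proof -
    have "(M ** Q)$i$j = (M *v g j)$i" for i j
      by (simp add: Q_def matrix_matrix_mult_def matrix_vector_mult_def)
    moreover have "(Q ** diag_matrix d)$i$j = d$j * g j $ i" for i j
      by (simp add: Q_def diag_matrix_def matrix_matrix_mult_def if_distrib cong: if_cong)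
    ultimately show ?thesis by (simp add: vec_eq_iff eig)
  qed
  then have "M = Q ** diag_matrix d ** transpose Q"
    using \<open>orthogonal_matrix Q\<close>
    by (metis matrix_mul_assoc matrix_mul_rid orthogonal_matrix_def)
  ultimately show ?thesis using that by blast
qed

section \<open>Eigenvalue vectors of orthogonally diagonalised matrices\<close>

lemma conj_diag_matrix_entry:
  "(Q ** diag_matrix d ** transpose Q)$i$j = (\<Sum>k\<in>UNIV. Q$i$k * d$k * Q$j$k)"
  by (simp add: matrix_matrix_mult_def diag_matrix_def transpose_def if_distrib sum.delta cong: if_cong)

lemma const_poly_sum: "(\<Sum>k\<in>A. [:f k:]) = [:\<Sum>k\<in>A. f k :: 'a::comm_monoid_add:]"
  by (induction A rule: infinite_finite_induct) auto

text \<open>Conjugating by \<open>Q\<close> with constant polynomial entries turns \<open>X I - D\<close> into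
  \<open>X I - Q D Q\<^sup>T\<close>, so both have the same determinant.\<close>
lemma char_poly_orthogonal_conj_diag:
  fixes Q :: "real^'n^'n" and d :: "real^'n"
  assumes "orthogonal_matrix Q"
  shows "char_poly (Q ** diag_matrix d ** transpose Q) = (\<Prod>i\<in>UNIV. [:-(d$i), 1:])"
proof -
  define P where "P = (\<chi> i j. [:Q$i$j:])"
  define D where "D = (\<chi> i j. if i = j then [:-(d$i), 1:] else (0 :: real poly))"
  have orth: "(\<Sum>k\<in>UNIV. Q$i$k * Q$j$k) = (if i = j then 1 else 0)" for i j
    using arg_cong[OF conjunct2[OF assms[unfolded orthogonal_matrix_def]], of "\<lambda>A. A$i$j"]
    by (simp add: matrix_matrix_mult_def transpose_def mat_def)
  have "(P ** transpose P)$i$j = (mat 1 :: real poly^'n^'n)$i$j" for i j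
    by (simp add: P_def matrix_matrix_mult_def transpose_def mat_def const_poly_sum orth)
  then have PP: "P ** transpose P = mat 1" by (simp add: vec_eq_iff)
  have "(P ** D ** transpose P)$i$j = (\<Sum>k\<in>UNIV. [:Q$i$k:] * [:-(d$k), 1:] * [:Q$j$k:])" for i j
    by (simp add: P_def D_def matrix_matrix_mult_def transpose_def if_distrib sum.delta cong: if_cong)
  also have "\<dots> i j = (\<Sum>k\<in>UNIV. smult (Q$i$k * Q$j$k) [:0, 1:] - [:Q$i$k * d$k * Q$j$k:])" for i j
    by (intro sum.cong) (simp_all add: poly_eq_iff coeff_pCons split: nat.split)
  also have "\<dots> i j = (if i = j then [:0, 1:] else 0) - [:(Q ** diag_matrix d ** transpose Q)$i$j:]"
    for i j
    by (simp only: sum_subtractf smult_sum[symmetric] const_poly_sum orth conj_diag_matrix_entry)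
      simp
  finally have "(\<chi> i j. (if i = j then [:0, 1:] else 0) - [:(Q ** diag_matrix d ** transpose Q)$i$j:])
      = P ** D ** transpose P"
    by (simp add: vec_eq_iff)
  then have "char_poly (Q ** diag_matrix d ** transpose Q) = det D * det (P ** transpose P)"
    by (simp add: char_poly_def det_mul det_transpose)
  also have "\<dots> = (\<Prod>i\<in>UNIV. [:-(d$i), 1:])"
    by (simp add: PP) (subst det_diagonal, auto simp: D_def)
  finally show ?thesis .
qed

lemma proots_prod_linear:
  "proots (\<Prod>i\<in>(UNIV::'n::finite set). [:-(d$i), 1::real:]) = image_mset (($) d) (mset_set UNIV)"
proof -
  have "(\<Sum>i\<in>A. {#d$i#}) = image_mset (($) d) (mset_set A)" for A :: "'n set"
    by (induction A rule: infinite_finite_induct) auto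
  then show ?thesis by (subst proots_prod) simp_all
qed

lemma card_less_bij: "bij_betw (\<lambda>i::'p::{finite,linorder}. card {j. j < i}) UNIV {..<CARD('p)}"
proof -
  let ?r = "\<lambda>i::'p. card {j. j < i}"
  have mono: "?r i < ?r i'" if "i < i'" for i i'
    using that by (intro psubset_card_mono) auto
  then have "inj ?r" by (intro linorder_injI) (metis less_irrefl)
  moreover have "range ?r \<subseteq> {..<CARD('p)}" by (auto intro: psubset_card_mono)
  moreover have "card (range ?r) = CARD('p)" using \<open>inj ?r\<close> by (simp add: card_image)
  ultimately show ?thesis by (simp add: bij_betw_def card_subset_eq)
qed

text \<open>\<open>eigvals M\<close> lists the roots of the characteristic polynomial in the order of the
  index type, so it is a permutation of any vector with the same multiset of entries.\<close>
lemma eigvals_permutation: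
  fixes M :: "real^('p::{finite,linorder})^('p::{finite,linorder})"
    and d :: "real^('p::{finite,linorder})"
  assumes roots: "proots (char_poly M) = image_mset (($) d) (mset_set UNIV)"
  obtains \<sigma> where "\<sigma> permutes UNIV" "eigvals M = (\<chi> i. d$\<sigma> i)"
proof -
  define n where "n = CARD('p)"
  define \<rho> where "\<rho> i = card {j. j < i}" for i :: 'p
  have \<rho>: "bij_betw \<rho> UNIV {..<n}" unfolding \<rho>_def n_def by (rule card_less_bij)
  define \<rho>' where "\<rho>' = the_inv_into UNIV \<rho>"
  have \<rho>': "bij_betw \<rho>' {..<n} UNIV" unfolding \<rho>'_def by (rule bij_betw_the_inv_into[OF \<rho>])
  define L where "L = rev (sorted_list_of_multiset (proots (char_poly M)))"
  define xs where "xs = map (\<lambda>k. d$\<rho>' k) [0..<n]"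
  have "mset xs = image_mset (($) d) (image_mset \<rho>' (mset_set {..<n}))"
    by (simp add: xs_def multiset.map_comp o_def atLeast_upt[symmetric] lessThan_atLeast0)
  also have "image_mset \<rho>' (mset_set {..<n}) = mset_set UNIV"
    using \<rho>' by (simp add: image_mset_mset_set bij_betw_def)
  finally have "mset L = mset xs" by (simp add: L_def roots)
  then obtain f where "bij_betw f {..<length L} {..<length xs}" "\<forall>k<length L. L ! k = xs ! f k"
    using permutation_Ex_bij by blast
  moreover have "length L = n" "length xs = n"
    using mset_eq_length[OF \<open>mset L = mset xs\<close>] by (simp_all add: xs_def)
  ultimately have f: "bij_betw f {..<n} {..<n}" "\<And>k. k < n \<Longrightarrow> L ! k = xs ! f k" by simp_all
  define \<sigma> where "\<sigma> = \<rho>' \<circ> f \<circ> \<rho>"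
  have "bij_betw \<sigma> UNIV UNIV" unfolding \<sigma>_def using \<rho> f(1) \<rho>' by (metis bij_betw_trans)
  then have "\<sigma> permutes UNIV" by (rule bij_imp_permutes) simp
  moreover have "eigvals M $ i = d $ \<sigma> i" for i
  proof -
    have "\<rho> i < n" "f (\<rho> i) < n" using \<rho> f(1) by (auto simp: bij_betw_def)
    then show ?thesis by (simp add: eigvals_def L_def[symmetric] \<rho>_def[symmetric] f(2) xs_def \<sigma>_def)
  qed
  ultimately show ?thesis using that by (simp add: vec_eq_iff)
qed

lemma eigvals_orthogonal_conj_diag:
  fixes Q :: "real^('p::{finite,linorder})^('p::{finite,linorder})"
    and d :: "real^('p::{finite,linorder})"
  assumes "orthogonal_matrix Q"
  obtains \<sigma> where "\<sigma> permutes UNIV" "eigvals (Q ** diag_matrix d ** transpose Q) = (\<chi> i. d$\<sigma> i)"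
proof -
  have "proots (char_poly (Q ** diag_matrix d ** transpose Q)) = image_mset (($) d) (mset_set UNIV)"
    by (simp add: char_poly_orthogonal_conj_diag[OF assms] proots_prod_linear)
  then show ?thesis using that by (rule eigvals_permutation)
qed

lemma orthogonal_conj_diag_permute:
  fixes Q :: "real^'n^'n" and d :: "real^'n"
  assumes Q: "orthogonal_matrix Q" and \<sigma>: "\<sigma> permutes UNIV"
  shows "orthogonal_matrix (\<chi> i j. Q$i$\<sigma> j)"
    and "(\<chi> i j. Q$i$\<sigma> j) ** diag_matrix (\<chi> i. d$\<sigma> i) ** transpose (\<chi> i j. Q$i$\<sigma> j)
       = Q ** diag_matrix d ** transpose Q"
proof -
  have col: "column j (\<chi> i j. Q$i$\<sigma> j) = column (\<sigma> j) Q" for j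
    by (simp add: column_def)
  show "orthogonal_matrix (\<chi> i j. Q$i$\<sigma> j)"
    using Q permutes_inj[OF \<sigma>]
    by (simp add: orthogonal_matrix_orthonormal_columns col inj_eq)
  show "(\<chi> i j. Q$i$\<sigma> j) ** diag_matrix (\<chi> i. d$\<sigma> i) ** transpose (\<chi> i j. Q$i$\<sigma> j)
       = Q ** diag_matrix d ** transpose Q"
    using sum.permute[OF \<sigma>, of "\<lambda>k. Q$_$k * d$k * Q$_$k"]
    by (simp add: vec_eq_iff conj_diag_matrix_entry o_def)
qed

theorem symmetric_matrix_spectral_decomposition:
  fixes M :: "real^('p::{finite,linorder})^('p::{finite,linorder})"
  assumes "symmetric_matrix M"
  obtains Q where "orthogonal_matrix Q" "M = Q ** diag_matrix (eigvals M) ** transpose Q"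
proof -
  obtain Q d where Q: "orthogonal_matrix Q" and M: "M = Q ** diag_matrix d ** transpose Q"
    using symmetric_matrix_diagonalizable[OF assms] .
  obtain \<sigma> where \<sigma>: "\<sigma> permutes UNIV" "eigvals M = (\<chi> i. d$\<sigma> i)"
    unfolding M by (rule eigvals_orthogonal_conj_diag[OF Q])
  show ?thesis
  proof (rule that)
    show "orthogonal_matrix (\<chi> i j. Q$i$\<sigma> j)" by (rule orthogonal_conj_diag_permute(1)[OF Q \<sigma>(1)])
    show "M = (\<chi> i j. Q$i$\<sigma> j) ** diag_matrix (eigvals M) ** transpose (\<chi> i j. Q$i$\<sigma> j)"
      unfolding \<sigma>(2) orthogonal_conj_diag_permute(2)[OF Q \<sigma>(1)] by (rule M)
  qed
qed

section \<open>Convex hulls of spectral sets\<close>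

lemma orthogonal_matrix_squares_doubly_stochastic:
  fixes W :: "real^'n^'n"
  assumes "orthogonal_matrix W"
  shows "doubly_stochastic (\<chi> j k. (W$j$k)\<^sup>2)"
proof -
  have "W ** transpose W = mat 1" "transpose W ** W = mat 1"
    using assms by (auto simp: orthogonal_matrix_def)
  from this[THEN arg_cong, of "\<lambda>A. A$j$j" for j] show ?thesis
    by (simp add: doubly_stochastic_def matrix_matrix_mult_def transpose_def mat_def power2_eq_square)
qed

lemma diagonal_conj_diag_matrix:
  "(\<chi> j. (W ** diag_matrix d ** transpose W)$j$j) = (\<chi> j k. (W$j$k)\<^sup>2) *v d"
  by (simp add: conj_diag_matrix_entry matrix_vector_mult_def vec_eq_iff power2_eq_square ac_simps)

definition perm_invariant_set :: "((real^'n) \<times> 'z) set \<Rightarrow> bool" where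
  "perm_invariant_set S \<longleftrightarrow>
     (\<forall>\<sigma> x z. \<sigma> permutes UNIV \<longrightarrow> (x, z) \<in> S \<longrightarrow> ((\<chi> i. x$\<sigma> i), z) \<in> S)"

lemma perm_invariant_setD:
  "perm_invariant_set S \<Longrightarrow> \<sigma> permutes UNIV \<Longrightarrow> (x, z) \<in> S \<Longrightarrow> ((\<chi> i. x$\<sigma> i), z) \<in> S"
  unfolding perm_invariant_set_def by blast

lemma linear_image_convex_hull_subset:
  "linear h \<Longrightarrow> h ` S \<subseteq> T \<Longrightarrow> h ` (convex hull S) \<subseteq> convex hull T"
  by (simp add: convex_hull_linear_image hull_mono)

lemma perm_invariant_set_convex_hull:
  fixes S :: "((real^'n) \<times> 'z::real_vector) set"
  assumes "perm_invariant_set S"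
  shows "perm_invariant_set (convex hull S)"
  unfolding perm_invariant_set_def
proof (intro allI impI)
  fix \<sigma> :: "'n \<Rightarrow> 'n" and x z assume \<sigma>: "\<sigma> permutes UNIV" and "(x, z) \<in> convex hull S"
  define h where "h p = ((\<chi> i. fst p $ \<sigma> i), snd p)" for p :: "(real^'n) \<times> 'z"
  have "linear h" by (intro linearI) (simp_all add: h_def vec_eq_iff)
  moreover have "h ` S \<subseteq> S" using assms \<sigma> by (auto simp: h_def perm_invariant_setD)
  ultimately have "h ` (convex hull S) \<subseteq> convex hull S" by (rule linear_image_convex_hull_subset)
  then show "((\<chi> i. x$\<sigma> i), z) \<in> convex hull S"
    using \<open>(x, z) \<in> convex hull S\<close> by (force simp: h_def)
qed

text \<open>Schur's theorem: the diagonal of \<open>Q\<^sup>T A Q\<close> is a doubly stochastic image of the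
  eigenvalues of \<open>A\<close>, hence a convex combination of their permutations.\<close>
lemma diagonal_conj_in_perm_invariant_convex:
  fixes A Q :: "real^('p::{finite,linorder})^('p::{finite,linorder})"
  assumes C: "perm_invariant_set C" "convex C"
    and A: "symmetric_matrix A" "(eigvals A, z) \<in> C" and Q: "orthogonal_matrix Q"
  shows "((\<chi> j. (transpose Q ** A ** Q)$j$j), z) \<in> C"
proof -
  obtain U where U: "orthogonal_matrix U" "A = U ** diag_matrix (eigvals A) ** transpose U"
    using symmetric_matrix_spectral_decomposition[OF A(1)] .
  define W where "W = transpose Q ** U"
  have "orthogonal_matrix W" unfolding W_def using Q U(1) by (simp add: orthogonal_matrix_mul)
  have "(\<chi> j. (transpose Q ** A ** Q)$j$j) = (\<chi> j k. (W$j$k)\<^sup>2) *v eigvals A"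
    unfolding diagonal_conj_diag_matrix[symmetric] W_def
    by (subst U(2)) (simp add: matrix_transpose_mul matrix_mul_assoc)
  also have "\<dots> \<in> convex hull ((\<lambda>\<sigma>. \<chi> i. eigvals A $ \<sigma> i) ` {\<sigma>. \<sigma> permutes UNIV})"
    using orthogonal_matrix_squares_doubly_stochastic[OF \<open>orthogonal_matrix W\<close>]
    by (rule doubly_stochastic_mult_in_convex_hull_permutations)
  also have "\<dots> \<subseteq> {x. (x, z) \<in> C}"
  proof (rule hull_minimal)
    show "(\<lambda>\<sigma>. \<chi> i. eigvals A $ \<sigma> i) ` {\<sigma>. \<sigma> permutes UNIV} \<subseteq> {x. (x, z) \<in> C}"
      using C(1) A(2) by (auto intro: perm_invariant_setD)
    have "{x. (x, z) \<in> C} = fst ` (C \<inter> UNIV \<times> {z})" by force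
    then show "convex {x. (x, z) \<in> C}"
      using C(2) by (simp add: convex_linear_image linear_fst convex_Int convex_Times)
  qed
  finally show ?thesis by simp
qed

lemma matrix_add_rdistrib: "(A + B) ** C = A ** C + B ** (C :: 'a::semiring_1^'n^'m)"
  by (simp add: matrix_matrix_mult_def vec_eq_iff sum.distrib distrib_right)

lemma diag_matrix_add: "diag_matrix (a + b) = diag_matrix a + diag_matrix b"
  and diag_matrix_scaleR: "diag_matrix (c *\<^sub>R a) = c *\<^sub>R diag_matrix a"
  by (simp_all add: diag_matrix_def vec_eq_iff)

lemma symmetric_matrix_conj_diag: "symmetric_matrix (Q ** diag_matrix d ** transpose Q)"
proof -
  have "transpose (diag_matrix d) = diag_matrix d"
    by (simp add: diag_matrix_def transpose_def vec_eq_iff)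
  then show ?thesis by (simp add: symmetric_matrix_def matrix_transpose_mul matrix_mul_assoc)
qed

lemma convex_spectral_set:
  fixes C :: "((real^('p::{finite,linorder})) \<times> 'z::real_vector) set"
  assumes C: "perm_invariant_set C" "convex C"
  shows "convex {(M, z). symmetric_matrix M \<and> (eigvals M, z) \<in> C}"
proof (rule convexI, clarsimp)
  fix A B z1 z2 and u v :: real
  assume A: "symmetric_matrix A" "(eigvals A, z1) \<in> C"
    and B: "symmetric_matrix B" "(eigvals B, z2) \<in> C"
    and uv: "0 \<le> u" "0 \<le> v" "u + v = 1"
  define N where "N = u *\<^sub>R A + v *\<^sub>R B"
  have "symmetric_matrix N"
    using A(1) B(1) by (simp add: N_def symmetric_matrix_def transpose_def vec_eq_iff)
  then obtain Q where Q: "orthogonal_matrix Q" "N = Q ** diag_matrix (eigvals N) ** transpose Q"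
    by (rule symmetric_matrix_spectral_decomposition)
  have "transpose Q ** N ** Q = diag_matrix (eigvals N)"
  proof -
    define D where "D = diag_matrix (eigvals N)"
    have "transpose Q ** N ** Q = (transpose Q ** Q) ** D ** (transpose Q ** Q)"
      using Q(2) by (simp add: D_def[symmetric] matrix_mul_assoc)
    then show ?thesis using Q(1) by (simp add: D_def orthogonal_matrix_def)
  qed
  moreover have "transpose Q ** N ** Q
      = u *\<^sub>R (transpose Q ** A ** Q) + v *\<^sub>R (transpose Q ** B ** Q)"
    by (simp add: N_def matrix_add_ldistrib matrix_add_rdistrib scalar_matrix_assoc matrix_scalar_ac)
  moreover define a b
    where "a = (\<chi> j. (transpose Q ** A ** Q)$j$j)" and "b = (\<chi> j. (transpose Q ** B ** Q)$j$j)"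
  ultimately have "eigvals N = u *\<^sub>R a + v *\<^sub>R b"
    by (simp add: vec_eq_iff diag_matrix_def)
  moreover have "u *\<^sub>R (a, z1) + v *\<^sub>R (b, z2) \<in> C"
    unfolding a_def b_def using uv
    by (intro convexD[OF C(2)] diagonal_conj_in_perm_invariant_convex[OF C _ _ Q(1)] A B)
  ultimately show "symmetric_matrix N \<and> (eigvals N, u *\<^sub>R z1 + v *\<^sub>R z2) \<in> C"
    using \<open>symmetric_matrix N\<close> by simp
qed

lemma spectral_set_convex_hull_subset:
  fixes S :: "((real^('p::{finite,linorder})) \<times> 'z::real_vector) set"
  assumes S: "perm_invariant_set S" and M: "symmetric_matrix M" "(eigvals M, z) \<in> convex hull S"
  shows "(M, z) \<in> convex hull {(M, z). symmetric_matrix M \<and> (eigvals M, z) \<in> S}"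
proof -
  obtain Q where Q: "orthogonal_matrix Q" "M = Q ** diag_matrix (eigvals M) ** transpose Q"
    using symmetric_matrix_spectral_decomposition[OF M(1)] .
  define \<Phi> where "\<Phi> p = (Q ** diag_matrix (fst p) ** transpose Q, snd p)"
    for p :: "(real^('p::{finite,linorder})) \<times> 'z"
  have "linear \<Phi>"
    by (intro linearI) (simp_all add: \<Phi>_def diag_matrix_add diag_matrix_scaleR matrix_add_ldistrib
        matrix_add_rdistrib scalar_matrix_assoc matrix_scalar_ac)
  moreover have "\<Phi> ` S \<subseteq> {(M, z). symmetric_matrix M \<and> (eigvals M, z) \<in> S}"
  proof (rule image_subsetI)
    fix p assume "p \<in> S"
    obtain x z where p: "p = (x, z)" by fastforce
    obtain \<sigma> where "\<sigma> permutes UNIV" "eigvals (Q ** diag_matrix x ** transpose Q) = (\<chi> i. x$\<sigma> i)"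
      by (rule eigvals_orthogonal_conj_diag[OF Q(1)])
    then show "\<Phi> p \<in> {(M, z). symmetric_matrix M \<and> (eigvals M, z) \<in> S}"
      using S \<open>p \<in> S\<close> by (simp add: p \<Phi>_def symmetric_matrix_conj_diag perm_invariant_setD)
  qed
  ultimately have
    "\<Phi> ` (convex hull S) \<subseteq> convex hull {(M, z). symmetric_matrix M \<and> (eigvals M, z) \<in> S}"
    by (rule linear_image_convex_hull_subset)
  moreover have "\<Phi> (eigvals M, z) = (M, z)" using Q(2) by (simp add: \<Phi>_def)
  ultimately show ?thesis using M(2) by force
qed

theorem convex_hull_spectral_set:
  fixes S :: "((real^('p::{finite,linorder})) \<times> 'z::real_vector) set"
  assumes "perm_invariant_set S"
  shows "convex hull {(M, z). symmetric_matrix M \<and> (eigvals M, z) \<in> S}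
       = {(M, z). symmetric_matrix M \<and> (eigvals M, z) \<in> convex hull S}"
proof
  show "convex hull {(M, z). symmetric_matrix M \<and> (eigvals M, z) \<in> S}
      \<subseteq> {(M, z). symmetric_matrix M \<and> (eigvals M, z) \<in> convex hull S}"
    using assms by (intro hull_minimal convex_spectral_set perm_invariant_set_convex_hull)
      (auto intro: hull_inc)
  show "{(M, z). symmetric_matrix M \<and> (eigvals M, z) \<in> convex hull S}
      \<subseteq> convex hull {(M, z). symmetric_matrix M \<and> (eigvals M, z) \<in> S}"
    using spectral_set_convex_hull_subset[OF assms] by auto
qed

lemma perm_matrix_mult_vec: "perm_matrix \<sigma> *v x = (\<chi> i. x$\<sigma> i)"
proof -
  have "(perm_matrix \<sigma> *v x)$i = (\<Sum>j\<in>UNIV. (if \<sigma> i = j then 1 else 0) * x$j)" for i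
    by (simp add: perm_matrix_def matrix_vector_mult_def)
  also have "\<dots> i = (\<Sum>j\<in>UNIV. if \<sigma> i = j then x$j else 0)" for i
    by (rule sum.cong) auto
  finally show ?thesis by (simp add: vec_eq_iff)
qed

lemma perm_invariant_set_sublevel:
  fixes f :: "'i \<Rightarrow> real^'n \<Rightarrow> 'z \<Rightarrow> real"
  assumes "\<And>i. i \<in> I \<Longrightarrow> perm_invariant (f i)"
  shows "perm_invariant_set {(x, z). \<forall>i\<in>I. f i x z \<le> 1}"
  unfolding perm_invariant_set_def
proof clarify
  fix \<sigma> :: "'n \<Rightarrow> 'n" and x z i
  assume \<sigma>: "\<sigma> permutes UNIV" and le: "\<forall>i\<in>I. f i x z \<le> 1" and i: "i \<in> I"
  have "is_perm_matrix (perm_matrix \<sigma>)" using \<sigma> by (auto simp: is_perm_matrix_def)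
  then have "f i (\<chi> j. x$\<sigma> j) z = f i x z"
    using assms[OF i] by (simp add: perm_invariant_def perm_matrix_mult_vec[symmetric])
  then show "f i (\<chi> j. x$\<sigma> j) z \<le> 1" using le i by simp
qed

theorem mainTheorem10:
  fixes f :: "nat \<Rightarrow> real^'p::{finite,linorder} \<Rightarrow> 'z::euclidean_space \<Rightarrow> real"
    and r :: nat
  assumes "\<And>i. i \<in> {1..r} \<Longrightarrow> perm_invariant (f i)"
  shows "convex hull {(M, z). symmetric_matrix M \<and> (\<forall>i\<in>{1..r}. f i (eigvals M) z \<le> 1)}
       = {(M, z). symmetric_matrix M \<and>
            (eigvals M, z) \<in> convex hull {(x, z). \<forall>i\<in>{1..r}. f i x z \<le> 1}}"
  using convex_hull_spectral_set[OF perm_invariant_set_sublevel[of "{1..r}" f, OF assms]] by simp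

end
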